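(* The uniform matroid $U_{2,4}$ (ground set of 4 elements, bases = all 2-element subsets) is not BUMAC; that is, there is no binary MAC $W$ with 4 users such that $I(X[S];Y,X[S^c])$ equals the rank function of $U_{2,4}$ on $\{1,2,3,4\}$ (namely $\min(|S|,2)$) for all $S\subseteq\{1,2,3,4\}$.
   Context: A binary MAC with $m$ users is a channel $W$ with input alphabet $\mathbb{F}_2^m$ and finite output alphabet $\mathcal{Y}$. Let $E_m=\{1,\dots,m\}$, let $X[E_m]$ have i.i.d. uniform components on $\mathbb{F}_2$, and let $Y$ be the output of $W$ with input $X[E_m]$. For $S\subseteq E_m$, $X[S]=(X[i])_{i\in S}$, $S^c=E_m\setminus S$. Mutual information is in bits. A matroid is BUMAC if it is isomorphic to the matroid on $E_m$ with rank function $S\mapsto I(X[S];Y,X[S^c])$ for some binary MAC $W$. *)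

theory Defs
  imports Main "HOL-Library.FuncSet" "HOL-Library.Log_Nat" Complex_Main
begin

text \<open>Users are indexed by E_m = {1..m}; F_2 is represented by bool.
  An input vector is an extensional function in {1..m} \<rightarrow>E UNIV.\<close>

definition users :: "nat \<Rightarrow> nat set" where
  "users m = {1..m}"

definition inputs :: "nat \<Rightarrow> (nat \<Rightarrow> bool) set" where
  "inputs m = users m \<rightarrow>\<^sub>E (UNIV :: bool set)"

text \<open>A binary MAC with m users and finite output alphabet 'y:
  W x y is the transition probability W(y|x).\<close>
definition binary_mac :: "nat \<Rightarrow> ((nat \<Rightarrow> bool) \<Rightarrow> 'y::finite \<Rightarrow> real) \<Rightarrow> bool" where
  "binary_mac m W \<longleftrightarrow>
     (\<forall>x\<in>inputs m. (\<forall>y. 0 \<le> W x y) \<and> (\<Sum>y\<in>UNIV. W x y) = 1)"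

definition prob_ev :: "'o set \<Rightarrow> ('o \<Rightarrow> real) \<Rightarrow> ('o \<Rightarrow> bool) \<Rightarrow> real" where
  "prob_ev \<Omega> q E = (\<Sum>\<omega>\<in>{\<omega>\<in>\<Omega>. E \<omega>}. q \<omega>)"

text \<open>Mutual information (in bits) between discrete random variables f and g
  on a finite sample space \<Omega> with pmf q:
  I(f;g) = sum_\<omega> q(\<omega>) log2 (P(f=f\<omega>, g=g\<omega>) / (P(f=f\<omega>) P(g=g\<omega>))),
  with the convention 0 log 0 = 0 (terms with q \<omega> = 0 vanish).\<close>
definition mutual_info ::
  "'o set \<Rightarrow> ('o \<Rightarrow> real) \<Rightarrow> ('o \<Rightarrow> 'a) \<Rightarrow> ('o \<Rightarrow> 'b) \<Rightarrow> real" where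
  "mutual_info \<Omega> q f g =
     (\<Sum>\<omega>\<in>\<Omega>. q \<omega> * log 2
        (prob_ev \<Omega> q (\<lambda>\<omega>'. f \<omega>' = f \<omega> \<and> g \<omega>' = g \<omega>) /
         (prob_ev \<Omega> q (\<lambda>\<omega>'. f \<omega>' = f \<omega>) * prob_ev \<Omega> q (\<lambda>\<omega>'. g \<omega>' = g \<omega>))))"

text \<open>I(X[S]; Y, X[S^c]) for uniform i.i.d. inputs X on F_2^m and output Y of W.
  Sample space: pairs (x, y), with probability 2^{-m} W(y|x).\<close>
definition mac_rank ::
  "nat \<Rightarrow> ((nat \<Rightarrow> bool) \<Rightarrow> 'y::finite \<Rightarrow> real) \<Rightarrow> nat set \<Rightarrow> real" where
  "mac_rank m W S =
     mutual_info (inputs m \<times> (UNIV :: 'y set))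
       (\<lambda>(x, y). W x y / 2 ^ m)
       (\<lambda>(x, y). restrict x S)
       (\<lambda>(x, y). (y, restrict x (users m - S)))"

end

theory Submission
  imports Defs
begin

text \<open>Write I(X[S]; Y, X[S^c]) = |S| - H(X[S] | Y, X[S^c]). If this were the rank function of
  U_{2,4}, the equivocation would vanish for every pair S, i.e. two inputs that can both produce
  the output y never agree on two coordinates. Among any three vectors of F_2^4 two agree on two
  coordinates, so every output has at most two possible inputs, which forces
  H(X | Y) \<le> log2 e < 2, contradicting I(X; Y) = 4 - H(X | Y) = 2.\<close>

definition agreeing_inputs :: "nat \<Rightarrow> nat set \<Rightarrow> (nat \<Rightarrow> bool) \<Rightarrow> (nat \<Rightarrow> bool) set" where
  "agreeing_inputs m T x = {x' \<in> inputs m. \<forall>i\<in>T. x' i = x i}"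

lemma finite_inputs [simp]: "finite (inputs m)"
  unfolding inputs_def users_def by (intro finite_PiE) auto

lemma card_inputs: "card (inputs m) = 2 ^ m"
  unfolding inputs_def by (simp add: card_PiE users_def)

lemma card_agreeing_inputs:
  assumes "T \<subseteq> users m"
  shows "card (agreeing_inputs m T x) = 2 ^ (m - card T)"
proof -
  have "agreeing_inputs m T x = PiE (users m) (\<lambda>i. if i \<in> T then {x i} else UNIV)"
    using assms unfolding agreeing_inputs_def inputs_def
    by (auto simp: PiE_iff extensional_def split: if_splits)
  then have "card (agreeing_inputs m T x) =
      (\<Prod>i\<in>users m. card (if i \<in> T then {x i} else (UNIV :: bool set)))"
    by (simp add: card_PiE users_def)
  also have "\<dots> = (\<Prod>i\<in>users m. if i \<in> T then 1 else 2)"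
    by (rule prod.cong) auto
  also have "\<dots> = 2 ^ card (users m - T)"
    by (simp add: prod.If_cases users_def Diff_eq)
  also have "card (users m - T) = m - card T"
    using assms by (simp add: card_Diff_subset finite_subset users_def)
  finally show ?thesis .
qed

lemma agreeing_inputs_users:
  assumes "x \<in> inputs m"
  shows "agreeing_inputs m (users m) x = {x}"
  using assms unfolding agreeing_inputs_def inputs_def by (auto intro: PiE_ext)

lemma binary_mac_nonneg: "binary_mac m W \<Longrightarrow> x \<in> inputs m \<Longrightarrow> 0 \<le> W x y"
  unfolding binary_mac_def by blast

lemma binary_mac_sum_outputs: "binary_mac m W \<Longrightarrow> x \<in> inputs m \<Longrightarrow> (\<Sum>y\<in>UNIV. W x y) = 1"
  unfolding binary_mac_def by blast

text \<open>fibre_mass m W S x y = 2^m P(Y = y, X[S^c] = x[S^c]), and equivocation m W S is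
  H(X[S] | Y, X[S^c]) in bits.\<close>

definition fibre_mass :: "nat \<Rightarrow> ((nat \<Rightarrow> bool) \<Rightarrow> 'y \<Rightarrow> real) \<Rightarrow> nat set \<Rightarrow> (nat \<Rightarrow> bool) \<Rightarrow> 'y \<Rightarrow> real" where
  "fibre_mass m W S x y = (\<Sum>x'\<in>agreeing_inputs m (users m - S) x. W x' y)"

definition equivocation :: "nat \<Rightarrow> ((nat \<Rightarrow> bool) \<Rightarrow> 'y::finite \<Rightarrow> real) \<Rightarrow> nat set \<Rightarrow> real" where
  "equivocation m W S =
     (\<Sum>(x, y)\<in>inputs m \<times> UNIV. W x y / 2 ^ m * log 2 (fibre_mass m W S x y / W x y))"

lemma le_fibre_mass:
  assumes "binary_mac m W" "x \<in> inputs m"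
  shows "W x y \<le> fibre_mass m W S x y"
  unfolding fibre_mass_def using assms
  by (intro member_le_sum) (auto simp: agreeing_inputs_def binary_mac_nonneg)

lemma prob_ev_mac:
  "prob_ev (inputs m \<times> UNIV) (\<lambda>(x, y). W x y / 2 ^ m) E =
     (\<Sum>(x, y)\<in>{\<omega>\<in>inputs m \<times> UNIV. E \<omega>}. W x y) / 2 ^ m"
  unfolding prob_ev_def by (simp add: sum_divide_distrib case_prod_unfold)

text \<open>The summand of mac_rank at (x, y), in the shape produced by unfolding mutual_info.\<close>

lemma mac_rank_summand:
  fixes W :: "(nat \<Rightarrow> bool) \<Rightarrow> 'y::finite \<Rightarrow> real"
  assumes mac: "binary_mac m W" and S: "S \<subseteq> users m" and x: "x \<in> inputs m"
  shows "W x y *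
     log 2 (prob_ev (inputs m \<times> UNIV) (\<lambda>(x, y). W x y / 2 ^ m)
              (\<lambda>\<omega>. (case \<omega> of (x', y') \<Rightarrow> restrict x' S) = restrict x S \<and>
                   (case \<omega> of (x', y') \<Rightarrow> (y', restrict x' (users m - S))) = (y, restrict x (users m - S))) /
            (prob_ev (inputs m \<times> UNIV) (\<lambda>(x, y). W x y / 2 ^ m)
              (\<lambda>\<omega>. (case \<omega> of (x', y') \<Rightarrow> restrict x' S) = restrict x S) *
             prob_ev (inputs m \<times> UNIV) (\<lambda>(x, y). W x y / 2 ^ m)
              (\<lambda>\<omega>. (case \<omega> of (x', y') \<Rightarrow> (y', restrict x' (users m - S))) = (y, restrict x (users m - S))))) =
     W x y * (card S - log 2 (fibre_mass m W S x y / W x y))"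
proof -
  have restrict_eq: "restrict x' T = restrict x T \<longleftrightarrow> (\<forall>i\<in>T. x' i = x i)" for x' T
    by (auto simp: fun_eq_iff restrict_def)
  have joint: "{\<omega> \<in> inputs m \<times> UNIV. (case \<omega> of (x', y') \<Rightarrow> restrict x' S) = restrict x S \<and>
      (case \<omega> of (x', y') \<Rightarrow> (y', restrict x' (users m - S))) = (y, restrict x (users m - S))}
      = agreeing_inputs m (users m) x \<times> {y}"
    using S by (auto simp: restrict_eq agreeing_inputs_def; blast)
  have on_S: "{\<omega> \<in> inputs m \<times> UNIV. (case \<omega> of (x', y') \<Rightarrow> restrict x' S) = restrict x S}
      = agreeing_inputs m S x \<times> UNIV"
    by (auto simp: restrict_eq agreeing_inputs_def)
  have off_S: "{\<omega> \<in> inputs m \<times> UNIV.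
      (case \<omega> of (x', y') \<Rightarrow> (y', restrict x' (users m - S))) = (y, restrict x (users m - S))}
      = agreeing_inputs m (users m - S) x \<times> {y}"
    by (auto simp: restrict_eq agreeing_inputs_def)
  have mass_on_S: "(\<Sum>(x', y')\<in>agreeing_inputs m S x \<times> UNIV. W x' y') = 2 ^ (m - card S)"
  proof -
    have "(\<Sum>(x', y')\<in>agreeing_inputs m S x \<times> UNIV. W x' y') = (\<Sum>x'\<in>agreeing_inputs m S x. 1)"
      using mac by (simp add: sum.cartesian_product[symmetric] agreeing_inputs_def binary_mac_sum_outputs)
    then show ?thesis using card_agreeing_inputs[OF S] by simp
  qed
  have mass_off_S: "(\<Sum>(x', y')\<in>agreeing_inputs m (users m - S) x \<times> {y}. W x' y') = fibre_mass m W S x y"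
    by (simp add: sum.cartesian_product[symmetric] fibre_mass_def)
  show ?thesis
  proof (cases "W x y = 0")
    case False
    define T where "T = fibre_mass m W S x y"
    have W_pos: "0 < W x y" using False binary_mac_nonneg[OF mac x] by (simp add: order_less_le)
    have T_pos: "0 < T" using le_fibre_mass[OF mac x, of y S] W_pos unfolding T_def by linarith
    have powers: "(2::real) ^ (m - card S) * 2 ^ card S = 2 ^ m"
      using card_mono[OF _ S] by (simp add: users_def flip: power_add)
    have "(W x y / 2 ^ m) / (2 ^ (m - card S) / 2 ^ m * (T / 2 ^ m)) = 2 ^ card S * (W x y / T)"
      using T_pos powers by (simp add: field_simps)
    moreover have "log 2 (2 ^ card S * (W x y / T)) = card S - log 2 (T / W x y)"
      using W_pos T_pos by (simp add: log_mult_pos log_divide_pos log_nat_power)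
    ultimately show ?thesis
      unfolding prob_ev_mac joint on_S off_S mass_on_S mass_off_S T_def[symmetric]
      by (simp add: agreeing_inputs_users[OF x])
  qed simp
qed

lemma sum_mac_pmf:
  assumes "binary_mac m W"
  shows "(\<Sum>(x, y)\<in>inputs m \<times> (UNIV :: 'y::finite set). W x y / 2 ^ m) = 1"
proof -
  have "(\<Sum>(x, y)\<in>inputs m \<times> (UNIV :: 'y set). W x y / 2 ^ m) = (\<Sum>x\<in>inputs m. 1 / 2 ^ m)"
    using assms by (simp add: sum.cartesian_product[symmetric] binary_mac_sum_outputs
        flip: sum_divide_distrib)
  then show ?thesis by (simp add: card_inputs)
qed

lemma mac_rank_eq_card_minus_equivocation:
  fixes W :: "(nat \<Rightarrow> bool) \<Rightarrow> 'y::finite \<Rightarrow> real"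
  assumes mac: "binary_mac m W" and S: "S \<subseteq> users m"
  shows "mac_rank m W S = card S - equivocation m W S"
proof -
  have "mac_rank m W S =
      (\<Sum>(x, y)\<in>inputs m \<times> UNIV. W x y / 2 ^ m * (card S - log 2 (fibre_mass m W S x y / W x y)))"
    unfolding mac_rank_def mutual_info_def
    by (rule sum.cong) (auto simp: mac_rank_summand[OF mac S])
  also have "\<dots> = card S * (\<Sum>(x, y)\<in>inputs m \<times> (UNIV :: 'y set). W x y / 2 ^ m) - equivocation m W S"
    unfolding equivocation_def
    by (simp add: case_prod_unfold right_diff_distrib sum_subtractf sum_distrib_left mult.commute)
  finally show ?thesis by (simp add: sum_mac_pmf[OF mac])
qed

lemma equivocation_summand_nonneg:
  assumes "binary_mac m W" "x \<in> inputs m"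
  shows "0 \<le> W x y / 2 ^ m * log 2 (fibre_mass m W S x y / W x y)"
proof (cases "W x y = 0")
  case False
  then have "0 < W x y" using binary_mac_nonneg[OF assms] by (simp add: order_less_le)
  then show ?thesis using le_fibre_mass[OF assms, of y S] by simp
qed simp

lemma equivocation_eq_0_imp_unique_input:
  fixes W :: "(nat \<Rightarrow> bool) \<Rightarrow> 'y::finite \<Rightarrow> real"
  assumes mac: "binary_mac m W" and zero: "equivocation m W S = 0"
    and x: "x \<in> inputs m" "0 < W x y"
    and x': "x' \<in> agreeing_inputs m (users m - S) x" "x' \<noteq> x"
  shows "W x' y = 0"
proof -
  have "\<forall>(x, y)\<in>inputs m \<times> (UNIV :: 'y set). W x y / 2 ^ m * log 2 (fibre_mass m W S x y / W x y) = 0"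
    using zero unfolding equivocation_def
    by (subst (asm) sum_nonneg_eq_0_iff) (use equivocation_summand_nonneg[OF mac] in auto)
  then have "W x y / 2 ^ m * log 2 (fibre_mass m W S x y / W x y) = 0" using x(1) by blast
  then have "log 2 (fibre_mass m W S x y / W x y) = 0" using x(2) by simp
  moreover have "0 < fibre_mass m W S x y" using le_fibre_mass[OF mac x(1), of y S] x(2) by linarith
  ultimately have "fibre_mass m W S x y / W x y = 1"
    using x(2) powr_log_cancel[of 2 "fibre_mass m W S x y / W x y"] by simp
  then have mass: "fibre_mass m W S x y = W x y" using x(2) by simp
  have "{x, x'} \<subseteq> agreeing_inputs m (users m - S) x"
    using x(1) x'(1) by (simp add: agreeing_inputs_def)
  then have "(\<Sum>z\<in>{x, x'}. W z y) \<le> fibre_mass m W S x y"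
    unfolding fibre_mass_def
    by (intro sum_mono2) (auto simp: agreeing_inputs_def binary_mac_nonneg[OF mac])
  then show ?thesis using mass binary_mac_nonneg[OF mac, of x' y] x' by (auto simp: agreeing_inputs_def)
qed

lemma mult_log_ratio_le:
  fixes w t :: real
  assumes "0 < w" "0 < t"
  shows "w * log 2 (t / w) \<le> (t - w) / ln 2"
proof -
  have "ln (t / w) \<le> t / w - 1" using assms by (intro ln_le_minus_one) simp
  then have "w * ln (t / w) \<le> t - w" using assms by (simp add: field_simps)
  then show ?thesis by (simp add: log_def divide_right_mono)
qed

text \<open>Cruder than the entropy bound log2 k, but sufficient: sum w log2 (t / w) \<le> (t - w) / ln 2
  over the at most k inputs of positive weight w.\<close>

lemma equivocation_users_le:
  fixes W :: "(nat \<Rightarrow> bool) \<Rightarrow> 'y::finite \<Rightarrow> real"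
  assumes mac: "binary_mac m W" and support: "\<And>y. card {x \<in> inputs m. 0 < W x y} \<le> k"
  shows "equivocation m W (users m) \<le> (real k - 1) / ln 2"
proof -
  define t where "t y = (\<Sum>x\<in>inputs m. W x y)" for y
  have mass: "fibre_mass m W (users m) x y = t y" for x y
    by (simp add: fibre_mass_def agreeing_inputs_def t_def)
  have "equivocation m W (users m) \<le>
      (\<Sum>(x, y)\<in>inputs m \<times> UNIV. (if 0 < W x y then t y - W x y else 0) / (2 ^ m * ln 2))"
    unfolding equivocation_def
  proof (rule sum_mono, clarify)
    fix x y assume x: "x \<in> inputs m"
    show "W x y / 2 ^ m * log 2 (fibre_mass m W (users m) x y / W x y) \<le>
        (if 0 < W x y then t y - W x y else 0) / (2 ^ m * ln 2)"
    proof (cases "0 < W x y")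
      case True
      then have "0 < t y" using le_fibre_mass[OF mac x, of y "users m"] mass by simp
      then show ?thesis using mult_log_ratio_le[OF True] True
        by (simp add: mass divide_right_mono field_simps)
    qed (use binary_mac_nonneg[OF mac x, of y] in simp)
  qed
  also have "\<dots> = (\<Sum>y\<in>UNIV. \<Sum>x\<in>inputs m. (if 0 < W x y then t y - W x y else 0) / (2 ^ m * ln 2))"
    unfolding sum.cartesian_product[symmetric] by (rule sum.swap)
  also have "\<dots> \<le> (\<Sum>y\<in>UNIV. (real k - 1) * t y / (2 ^ m * ln 2))"
  proof (rule sum_mono)
    fix y
    define A where "A = {x \<in> inputs m. 0 < W x y}"
    have t_nonneg: "0 \<le> t y"
      unfolding t_def using binary_mac_nonneg[OF mac] by (simp add: sum_nonneg)
    have mass_A: "(\<Sum>x\<in>A. W x y) = t y"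
      unfolding A_def t_def using binary_mac_nonneg[OF mac]
      by (intro sum.mono_neutral_left) (auto intro: antisym simp: not_less)
    have "(\<Sum>x\<in>inputs m. if 0 < W x y then t y - W x y else 0) = (\<Sum>x\<in>A. t y - W x y)"
      unfolding A_def by (rule sum.inter_filter[symmetric]) simp
    also have "\<dots> = real (card A) * t y - t y"
      using mass_A by (simp add: sum_subtractf)
    also have "\<dots> \<le> (real k - 1) * t y"
    proof -
      have "real (card A) * t y \<le> real k * t y"
        using support[of y] t_nonneg unfolding A_def by (intro mult_right_mono) simp_all
      then show ?thesis by (simp add: left_diff_distrib)
    qed
    finally show "(\<Sum>x\<in>inputs m. (if 0 < W x y then t y - W x y else 0) / (2 ^ m * ln 2))
        \<le> (real k - 1) * t y / (2 ^ m * ln 2)"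
      by (simp add: sum_divide_distrib[symmetric] divide_right_mono)
  qed
  also have "\<dots> = (real k - 1) / ln 2"
  proof -
    have "(\<Sum>y\<in>UNIV. t y) = (\<Sum>x\<in>inputs m. \<Sum>y\<in>UNIV. W x y)"
      unfolding t_def by (rule sum.swap)
    also have "\<dots> = 2 ^ m"
      using mac by (simp add: binary_mac_sum_outputs card_inputs)
    finally have "(\<Sum>y\<in>UNIV. t y) = 2 ^ m" .
    then show ?thesis by (simp add: sum_divide_distrib[symmetric] sum_distrib_left[symmetric])
  qed
  finally show ?thesis .
qed

lemma users_4: "users 4 = {1, 2, 3, 4}"
  by (auto simp: users_def)

lemma three_inputs_agree_twice:
  fixes a b c :: "nat \<Rightarrow> bool"
  shows "\<exists>i\<in>users 4. \<exists>j\<in>users 4. i \<noteq> j \<and>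
    ((a i = b i \<and> a j = b j) \<or> (a i = c i \<and> a j = c j) \<or> (b i = c i \<and> b j = c j))"
  unfolding users_4
  by (cases "a 1"; cases "a 2"; cases "a 3"; cases "a 4"; cases "b 1"; cases "b 2"; cases "b 3"; cases "b 4";
      simp; blast)

lemma support_le_2_if_pairs_determined:
  fixes W :: "(nat \<Rightarrow> bool) \<Rightarrow> 'y::finite \<Rightarrow> real"
  assumes mac: "binary_mac 4 W"
    and pairs: "\<And>S. S \<subseteq> users 4 \<Longrightarrow> card S = 2 \<Longrightarrow> equivocation 4 W S = 0"
  shows "card {x \<in> inputs 4. 0 < W x y} \<le> 2"
proof (rule ccontr)
  have separated: "\<not> (u i = v i \<and> u j = v j)"
    if "u \<in> inputs 4" "0 < W u y" "v \<in> inputs 4" "0 < W v y" "u \<noteq> v"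
      "i \<in> users 4" "j \<in> users 4" "i \<noteq> j" for u v i j
  proof
    assume agree: "u i = v i \<and> u j = v j"
    define S where "S = users 4 - {i, j}"
    have S: "S \<subseteq> users 4" "card S = 2" "users 4 - S = {i, j}"
      using that(6-8) by (auto simp: S_def users_4 card_Diff_subset)
    have "v \<in> agreeing_inputs 4 (users 4 - S) u"
      using agree that(3) by (auto simp: S(3) agreeing_inputs_def)
    then have "W v y = 0"
      using equivocation_eq_0_imp_unique_input[OF mac pairs[OF S(1,2)] that(1,2)] that(5) by blast
    then show False using that(4) by simp
  qed
  assume "\<not> card {x \<in> inputs 4. 0 < W x y} \<le> 2"
  then have "3 \<le> card {x \<in> inputs 4. 0 < W x y}" by simp
  then obtain T where "T \<subseteq> {x \<in> inputs 4. 0 < W x y}" "card T = 3"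
    by (meson obtain_subset_with_card_n)
  then obtain a b c where "{a, b, c} \<subseteq> {x \<in> inputs 4. 0 < W x y}" "a \<noteq> b" "a \<noteq> c" "b \<noteq> c"
    by (auto simp: card_3_iff)
  then show False
    using three_inputs_agree_twice[of a b c] separated by blast
qed

lemma half_less_ln_2: "1 / 2 < ln (2::real)"
proof -
  have "ln (3 / 4 :: real) \<le> 3 / 4 - 1" "ln (2 / 3 :: real) \<le> 2 / 3 - 1"
    by (intro ln_le_minus_one; simp)+
  moreover have "ln (3 / 4 :: real) + ln (2 / 3) = ln (3 / 4 * (2 / 3))"
    using ln_mult[of "3 / 4 :: real" "2 / 3"] by simp
  moreover have "ln (3 / 4 * (2 / 3) :: real) = - ln 2"
    by (simp add: ln_div)
  ultimately show ?thesis by linarith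
qed

theorem mainTheorem2:
  fixes W :: "(nat \<Rightarrow> bool) \<Rightarrow> 'y::finite \<Rightarrow> real"
  assumes "binary_mac 4 W"
  shows "\<not> (\<forall>S\<subseteq>users 4. mac_rank 4 W S = real (min (card S) 2))"
proof
  assume rank: "\<forall>S\<subseteq>users 4. mac_rank 4 W S = real (min (card S) 2)"
  have "equivocation 4 W S = 0" if "S \<subseteq> users 4" "card S = 2" for S
    using rank that mac_rank_eq_card_minus_equivocation[OF assms that(1)] by simp
  then have "equivocation 4 W (users 4) \<le> 1 / ln 2"
    using equivocation_users_le[OF assms support_le_2_if_pairs_determined[OF assms]] by simp
  also have "\<dots> < 2" using half_less_ln_2 by (simp add: field_simps)
  finally show False
    using rank mac_rank_eq_card_minus_equivocation[OF assms, of "users 4"] by (simp add: users_4)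
qed

end
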